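(* Let $I$ be a set and $P_i$ ($i\in I$) pastures, and let $\bigotimes_{i\in I}P_i$ and $i_j:P_j\to\bigotimes_{i\in I}P_i$ be as described in the context. Then $\bigotimes_{i\in I}P_i$ is a pasture, and for each $j\in I$ the map $i_j$ is a morphism of pastures.
   Context: A pasture is a multiplicative monoid $P$ with a zero element $0$ (absorbing) such that $P^\times=P\setminus\{0\}$ is an abelian group, together with an involution $x\mapsto -x$ fixing $0$, and a subset $N_P\subseteq P^3$ (write $a+b+c=0$ for $(a,b,c)\in N_P$) such that: (1) $N_P$ is invariant under permutations; (2) if $a+b+c=0$ then $da+db+dc=0$ for all $d\in P$; (3) $a+b+0=0$ iff $a=-b$. A morphism of pastures is a multiplicative map $f$ with $f(0)=0$, $f(1)=1$, $f(-a)=-f(a)$, preserving nullsets. The coproduct: let $\bigoplus_{i\in I}P_i^\times$ be the set of families $(x_i)_{i\in I}$ with $x_i\in P_i^\times$ and $x_i=1_i$ for all but finitely many $i$. Define $(x_i)\sim(y_i)$ iff there is a finite set of indices of even cardinality on which $x_i=-y_i$, with $x_i=y_i$ at all other indices (an equivalence relation). Set $\bigotimes_{i\in I}P_i=\{0\}\cup(\bigoplus_{i\in I}P_i^\times/\sim)$, classes written $[(x_i)_{i\in I}]$. Multiplication: $0$ absorbing, $[(x_i)][(y_i)]=[(x_iy_i)]$. Involution: $-0=0$ and $-[(x_i)]=[(y_i)]$ where $y_j=-x_j$ for one chosen index $j$ and $y_i=x_i$ for $i\neq j$. Nullset: for nonzero elements, $[(x_i)]+[(y_i)]+[(z_i)]=0$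 iff there are representatives $(x_i'),(y_i'),(z_i')$ of these classes and an index $j$ with $x'_j+y'_j+z'_j=0$ in $P_j$ and $x'_i=y'_i=z'_i$ for all $i\neq j$; relations involving $0$ are the permutations of $u+v+0=0$ iff $u=-v$. The maps: $i_j(0)=0$ and $i_j(x)=[(y_i)_{i\in I}]$ with $y_j=x$ and $y_i=1_i$ for $i\neq j$. *)

theory Defs
  imports Main
begin

record 'a pasture =
  pcarrier :: "'a set"
  pzero    :: 'a
  pone     :: 'a
  pmult    :: "'a \<Rightarrow> 'a \<Rightarrow> 'a"
  pneg     :: "'a \<Rightarrow> 'a"
  pnull    :: "('a \<times> 'a \<times> 'a) set"

definition pasture :: "('a, 'b) pasture_scheme \<Rightarrow> bool" where
  "pasture P \<longleftrightarrow>
     pzero P \<in> pcarrier P \<and>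
     pone P \<in> pcarrier P - {pzero P} \<and>
     (\<forall>x\<in>pcarrier P. \<forall>y\<in>pcarrier P. pmult P x y \<in> pcarrier P) \<and>
     (\<forall>x\<in>pcarrier P. \<forall>y\<in>pcarrier P. \<forall>z\<in>pcarrier P.
         pmult P (pmult P x y) z = pmult P x (pmult P y z)) \<and>
     (\<forall>x\<in>pcarrier P. \<forall>y\<in>pcarrier P. pmult P x y = pmult P y x) \<and>
     (\<forall>x\<in>pcarrier P. pmult P (pone P) x = x) \<and>
     (\<forall>x\<in>pcarrier P. pmult P (pzero P) x = pzero P) \<and>
     (\<forall>x\<in>pcarrier P - {pzero P}. \<forall>y\<in>pcarrier P - {pzero P}. pmult P x y \<noteq> pzero P) \<and>
     (\<forall>x\<in>pcarrier P - {pzero P}. \<exists>y\<in>pcarrier P - {pzero P}. pmult P x y = pone P) \<and>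
     (\<forall>x\<in>pcarrier P. pneg P x \<in> pcarrier P \<and> pneg P (pneg P x) = x) \<and>
     pneg P (pzero P) = pzero P \<and>
     pnull P \<subseteq> pcarrier P \<times> pcarrier P \<times> pcarrier P \<and>
     (\<forall>a b c. (a, b, c) \<in> pnull P \<longrightarrow> (b, a, c) \<in> pnull P \<and> (a, c, b) \<in> pnull P) \<and>
     (\<forall>a b c. (a, b, c) \<in> pnull P \<longrightarrow> (\<forall>d\<in>pcarrier P.
         (pmult P d a, pmult P d b, pmult P d c) \<in> pnull P)) \<and>
     (\<forall>a\<in>pcarrier P. \<forall>b\<in>pcarrier P. (a, b, pzero P) \<in> pnull P \<longleftrightarrow> a = pneg P b)"

definition pasture_hom ::
  "('a, 'c) pasture_scheme \<Rightarrow> ('b, 'd) pasture_scheme \<Rightarrow> ('a \<Rightarrow> 'b) \<Rightarrow> bool" where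
  "pasture_hom P Q f \<longleftrightarrow>
     (\<forall>x\<in>pcarrier P. f x \<in> pcarrier Q) \<and>
     f (pzero P) = pzero Q \<and> f (pone P) = pone Q \<and>
     (\<forall>x\<in>pcarrier P. \<forall>y\<in>pcarrier P. f (pmult P x y) = pmult Q (f x) (f y)) \<and>
     (\<forall>x\<in>pcarrier P. f (pneg P x) = pneg Q (f x)) \<and>
     (\<forall>a b c. (a, b, c) \<in> pnull P \<longrightarrow> (f a, f b, f c) \<in> pnull Q)"

text \<open>Nonzero elements of the coproduct are equivalence classes of families (sets of functions);
  the zero element is represented by the empty set.\<close>

definition cp_fams :: "'i set \<Rightarrow> ('i \<Rightarrow> 'a pasture) \<Rightarrow> ('i \<Rightarrow> 'a) set" where
  "cp_fams I P = {x. (\<forall>i\<in>I. x i \<in> pcarrier (P i) - {pzero (P i)}) \<and>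
                      (\<forall>i. i \<notin> I \<longrightarrow> x i = undefined) \<and>
                      finite {i\<in>I. x i \<noteq> pone (P i)}}"

definition cp_rel :: "'i set \<Rightarrow> ('i \<Rightarrow> 'a pasture) \<Rightarrow> ('i \<Rightarrow> 'a) \<Rightarrow> ('i \<Rightarrow> 'a) \<Rightarrow> bool" where
  "cp_rel I P x y \<longleftrightarrow> (\<exists>S. S \<subseteq> I \<and> finite S \<and> even (card S) \<and>
       (\<forall>i\<in>S. x i = pneg (P i) (y i)) \<and> (\<forall>i\<in>I - S. x i = y i))"

definition cp_class :: "'i set \<Rightarrow> ('i \<Rightarrow> 'a pasture) \<Rightarrow> ('i \<Rightarrow> 'a) \<Rightarrow> ('i \<Rightarrow> 'a) set" where
  "cp_class I P x = {y \<in> cp_fams I P. cp_rel I P y x}"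

definition cp_rep :: "('i \<Rightarrow> 'a) set \<Rightarrow> ('i \<Rightarrow> 'a)" where
  "cp_rep A = (SOME x. x \<in> A)"

definition coprod :: "'i set \<Rightarrow> ('i \<Rightarrow> 'a pasture) \<Rightarrow> ('i \<Rightarrow> 'a) set pasture" where
  "coprod I P = \<lparr>
     pcarrier = {{}} \<union> cp_class I P ` cp_fams I P,
     pzero = {},
     pone = cp_class I P (\<lambda>i. if i \<in> I then pone (P i) else undefined),
     pmult = (\<lambda>A B. if A = {} \<or> B = {} then {}
                    else cp_class I P (\<lambda>i. if i \<in> I then pmult (P i) (cp_rep A i) (cp_rep B i)
                                           else undefined)),
     pneg = (\<lambda>A. if A = {} then {}
                 else if I = {} then A
                 else (let j = (SOME j. j \<in> I) in
                       cp_class I P ((cp_rep A)(j := pneg (P j) (cp_rep A j))))),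
     pnull = {(A, B, C). A \<in> cp_class I P ` cp_fams I P \<and> B \<in> cp_class I P ` cp_fams I P \<and>
                 C \<in> cp_class I P ` cp_fams I P \<and>
                 (\<exists>x\<in>A. \<exists>y\<in>B. \<exists>z\<in>C. \<exists>j\<in>I. (x j, y j, z j) \<in> pnull (P j) \<and>
                     (\<forall>i\<in>I - {j}. x i = y i \<and> y i = z i))}
           \<union> {(A, B, C). A \<in> {{}} \<union> cp_class I P ` cp_fams I P \<and>
                 B \<in> {{}} \<union> cp_class I P ` cp_fams I P \<and>
                 C \<in> {{}} \<union> cp_class I P ` cp_fams I P \<and>
                 ((C = {} \<and> A = (if B = {} then {} else if I = {} then B else
                      (let j = (SOME j. j \<in> I) in cp_class I P ((cp_rep B)(j := pneg (P j) (cp_rep B j)))))) \<or>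
                  (B = {} \<and> A = (if C = {} then {} else if I = {} then C else
                      (let j = (SOME j. j \<in> I) in cp_class I P ((cp_rep C)(j := pneg (P j) (cp_rep C j)))))) \<or>
                  (A = {} \<and> B = (if C = {} then {} else if I = {} then C else
                      (let j = (SOME j. j \<in> I) in cp_class I P ((cp_rep C)(j := pneg (P j) (cp_rep C j)))))))}
   \<rparr>"

definition cp_inj :: "'i set \<Rightarrow> ('i \<Rightarrow> 'a pasture) \<Rightarrow> 'i \<Rightarrow> 'a \<Rightarrow> ('i \<Rightarrow> 'a) set" where
  "cp_inj I P j x = (if x = pzero (P j) then {}
     else cp_class I P (\<lambda>i. if i = j then x else if i \<in> I then pone (P i) else undefined))"

end

theory Submission
  imports Defs
begin

text \<open>Nonzero elements of the coproduct are families of units modulo sign changes in an even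
  number of coordinates. Componentwise multiplication respects this relation, and so does a sign
  change in a single coordinate; moreover, sign changes in two different coordinates yield related
  families. Hence the operations of the coproduct, although defined through arbitrary
  representatives and an arbitrarily chosen coordinate, can be computed on any representative and
  in any coordinate, and each pasture axiom reduces to the same axiom in one factor. The injection
  of the \<open>j\<close>-th factor puts its argument into coordinate \<open>j\<close>, so it is compatible
  with all of this structure.\<close>

section \<open>Consequences of the pasture axioms\<close>

context
  fixes Q :: "('a, 'b) pasture_scheme"
  assumes Q: "pasture Q"
begin

lemma pastureD:
  "pzero Q \<in> pcarrier Q"
  "pone Q \<in> pcarrier Q - {pzero Q}"
  "\<forall>x\<in>pcarrier Q. \<forall>y\<in>pcarrier Q. pmult Q x y \<in> pcarrier Q"
  "\<forall>x\<in>pcarrier Q. \<forall>y\<in>pcarrier Q. \<forall>z\<in>pcarrier Q.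
     pmult Q (pmult Q x y) z = pmult Q x (pmult Q y z)"
  "\<forall>x\<in>pcarrier Q. \<forall>y\<in>pcarrier Q. pmult Q x y = pmult Q y x"
  "\<forall>x\<in>pcarrier Q. pmult Q (pone Q) x = x"
  "\<forall>x\<in>pcarrier Q. pmult Q (pzero Q) x = pzero Q"
  "\<forall>x\<in>pcarrier Q - {pzero Q}. \<forall>y\<in>pcarrier Q - {pzero Q}. pmult Q x y \<noteq> pzero Q"
  "\<forall>x\<in>pcarrier Q - {pzero Q}. \<exists>y\<in>pcarrier Q - {pzero Q}. pmult Q x y = pone Q"
  "\<forall>x\<in>pcarrier Q. pneg Q x \<in> pcarrier Q \<and> pneg Q (pneg Q x) = x"
  "pneg Q (pzero Q) = pzero Q"
  "pnull Q \<subseteq> pcarrier Q \<times> pcarrier Q \<times> pcarrier Q"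
  "\<forall>a b c. (a, b, c) \<in> pnull Q \<longrightarrow> (b, a, c) \<in> pnull Q \<and> (a, c, b) \<in> pnull Q"
  "\<forall>a b c. (a, b, c) \<in> pnull Q \<longrightarrow>
     (\<forall>d\<in>pcarrier Q. (pmult Q d a, pmult Q d b, pmult Q d c) \<in> pnull Q)"
  "\<forall>a\<in>pcarrier Q. \<forall>b\<in>pcarrier Q. (a, b, pzero Q) \<in> pnull Q \<longleftrightarrow> a = pneg Q b"
  apply (insert Q[unfolded pasture_def])
  apply ((elim conjE, assumption)+)
  done

lemma pasture_zero_in_carrier: "pzero Q \<in> pcarrier Q"
  using pastureD(1) .

lemma pasture_one_in_carrier: "pone Q \<in> pcarrier Q"
  and pasture_one_neq_zero: "pone Q \<noteq> pzero Q"
  using pastureD(2) by simp_all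

lemma pasture_mult_closed: "x \<in> pcarrier Q \<Longrightarrow> y \<in> pcarrier Q \<Longrightarrow> pmult Q x y \<in> pcarrier Q"
  using pastureD(3) by blast

lemma pasture_mult_assoc:
  "x \<in> pcarrier Q \<Longrightarrow> y \<in> pcarrier Q \<Longrightarrow> z \<in> pcarrier Q \<Longrightarrow>
    pmult Q (pmult Q x y) z = pmult Q x (pmult Q y z)"
  using pastureD(4) by blast

lemma pasture_mult_comm: "x \<in> pcarrier Q \<Longrightarrow> y \<in> pcarrier Q \<Longrightarrow> pmult Q x y = pmult Q y x"
  using pastureD(5) by blast

lemma pasture_one_mult: "x \<in> pcarrier Q \<Longrightarrow> pmult Q (pone Q) x = x"
  using pastureD(6) by blast

lemma pasture_zero_mult: "x \<in> pcarrier Q \<Longrightarrow> pmult Q (pzero Q) x = pzero Q"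
  using pastureD(7) by blast

lemma pasture_mult_neq_zero:
  "x \<in> pcarrier Q \<Longrightarrow> y \<in> pcarrier Q \<Longrightarrow> x \<noteq> pzero Q \<Longrightarrow> y \<noteq> pzero Q \<Longrightarrow>
    pmult Q x y \<noteq> pzero Q"
  using pastureD(8) by blast

lemma pasture_inverse_ex:
  "x \<in> pcarrier Q \<Longrightarrow> x \<noteq> pzero Q \<Longrightarrow>
    \<exists>y. y \<in> pcarrier Q \<and> y \<noteq> pzero Q \<and> pmult Q x y = pone Q"
  using pastureD(9) by blast

lemma pasture_neg_closed: "x \<in> pcarrier Q \<Longrightarrow> pneg Q x \<in> pcarrier Q"
  and pasture_neg_neg: "x \<in> pcarrier Q \<Longrightarrow> pneg Q (pneg Q x) = x"
  using pastureD(10) by blast+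

lemma pasture_neg_zero: "pneg Q (pzero Q) = pzero Q"
  using pastureD(11) .

lemma pasture_null_in_carrier:
  "(a, b, c) \<in> pnull Q \<Longrightarrow> a \<in> pcarrier Q \<and> b \<in> pcarrier Q \<and> c \<in> pcarrier Q"
  using pastureD(12) by blast

lemma pasture_null_swap12: "(a, b, c) \<in> pnull Q \<Longrightarrow> (b, a, c) \<in> pnull Q"
  and pasture_null_swap23: "(a, b, c) \<in> pnull Q \<Longrightarrow> (a, c, b) \<in> pnull Q"
  using pastureD(13) by blast+

lemma pasture_null_mult:
  "(a, b, c) \<in> pnull Q \<Longrightarrow> d \<in> pcarrier Q \<Longrightarrow>
    (pmult Q d a, pmult Q d b, pmult Q d c) \<in> pnull Q"
  using pastureD(14) by blast

lemma pasture_null_zero_iff: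
  "a \<in> pcarrier Q \<Longrightarrow> b \<in> pcarrier Q \<Longrightarrow> (a, b, pzero Q) \<in> pnull Q \<longleftrightarrow> a = pneg Q b"
  using pastureD(15) by blast

lemma pasture_mult_zero: "x \<in> pcarrier Q \<Longrightarrow> pmult Q x (pzero Q) = pzero Q"
  using pasture_mult_comm pasture_zero_in_carrier pasture_zero_mult by metis

lemma pasture_neg_neq_zero: "x \<in> pcarrier Q \<Longrightarrow> x \<noteq> pzero Q \<Longrightarrow> pneg Q x \<noteq> pzero Q"
  using pasture_neg_neg pasture_neg_zero by metis

lemma pasture_mult_neg:
  assumes "d \<in> pcarrier Q" "b \<in> pcarrier Q"
  shows "pmult Q d (pneg Q b) = pneg Q (pmult Q d b)"
proof -
  have "(pneg Q b, b, pzero Q) \<in> pnull Q"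
    using pasture_null_zero_iff pasture_neg_closed assms by blast
  from pasture_null_mult[OF this assms(1)]
  have "(pmult Q d (pneg Q b), pmult Q d b, pzero Q) \<in> pnull Q"
    using pasture_mult_zero assms by simp
  then show ?thesis
    using pasture_null_zero_iff pasture_mult_closed pasture_neg_closed assms by blast
qed

end

lemma pastureI:
  assumes "pzero Q \<in> pcarrier Q" "pone Q \<in> pcarrier Q" "pone Q \<noteq> pzero Q"
    "\<And>x y. x \<in> pcarrier Q \<Longrightarrow> y \<in> pcarrier Q \<Longrightarrow> pmult Q x y \<in> pcarrier Q"
    "\<And>x y z. x \<in> pcarrier Q \<Longrightarrow> y \<in> pcarrier Q \<Longrightarrow> z \<in> pcarrier Q \<Longrightarrow>
      pmult Q (pmult Q x y) z = pmult Q x (pmult Q y z)"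
    "\<And>x y. x \<in> pcarrier Q \<Longrightarrow> y \<in> pcarrier Q \<Longrightarrow> pmult Q x y = pmult Q y x"
    "\<And>x. x \<in> pcarrier Q \<Longrightarrow> pmult Q (pone Q) x = x"
    "\<And>x. x \<in> pcarrier Q \<Longrightarrow> pmult Q (pzero Q) x = pzero Q"
    "\<And>x y. x \<in> pcarrier Q - {pzero Q} \<Longrightarrow> y \<in> pcarrier Q - {pzero Q} \<Longrightarrow>
      pmult Q x y \<noteq> pzero Q"
    "\<And>x. x \<in> pcarrier Q - {pzero Q} \<Longrightarrow> \<exists>y\<in>pcarrier Q - {pzero Q}. pmult Q x y = pone Q"
    "\<And>x. x \<in> pcarrier Q \<Longrightarrow> pneg Q x \<in> pcarrier Q"
    "\<And>x. x \<in> pcarrier Q \<Longrightarrow> pneg Q (pneg Q x) = x"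
    "pneg Q (pzero Q) = pzero Q"
    "pnull Q \<subseteq> pcarrier Q \<times> pcarrier Q \<times> pcarrier Q"
    "\<And>a b c. (a, b, c) \<in> pnull Q \<Longrightarrow> (b, a, c) \<in> pnull Q"
    "\<And>a b c. (a, b, c) \<in> pnull Q \<Longrightarrow> (a, c, b) \<in> pnull Q"
    "\<And>a b c d. (a, b, c) \<in> pnull Q \<Longrightarrow> d \<in> pcarrier Q \<Longrightarrow>
      (pmult Q d a, pmult Q d b, pmult Q d c) \<in> pnull Q"
    "\<And>a b. a \<in> pcarrier Q \<Longrightarrow> b \<in> pcarrier Q \<Longrightarrow>
      (a, b, pzero Q) \<in> pnull Q \<longleftrightarrow> a = pneg Q b"
  shows "pasture Q"
  unfolding pasture_def
  by (intro conjI ballI allI impI DiffI; (rule assms; assumption)?) (simp add: assms(3))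

text \<open>Null triples with a zero entry are determined by the involution, so a map preserving zero
  and negation only has to be checked on null triples of nonzero elements.\<close>

lemma pasture_homI:
  assumes P: "pasture P" and Q: "pasture Q"
    and closed: "\<And>x. x \<in> pcarrier P \<Longrightarrow> f x \<in> pcarrier Q"
    and zero: "f (pzero P) = pzero Q" and one: "f (pone P) = pone Q"
    and mult: "\<And>x y. x \<in> pcarrier P \<Longrightarrow> y \<in> pcarrier P \<Longrightarrow>
      f (pmult P x y) = pmult Q (f x) (f y)"
    and neg: "\<And>x. x \<in> pcarrier P \<Longrightarrow> f (pneg P x) = pneg Q (f x)"
    and null_nonzero: "\<And>a b c. (a, b, c) \<in> pnull P \<Longrightarrow>
      a \<noteq> pzero P \<Longrightarrow> b \<noteq> pzero P \<Longrightarrow> c \<noteq> pzero P \<Longrightarrow> (f a, f b, f c) \<in> pnull Q"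
  shows "pasture_hom P Q f"
proof -
  have null_last_zero: "(f a, f b, f c) \<in> pnull Q"
    if abc: "(a, b, c) \<in> pnull P" and c: "c = pzero P" for a b c
  proof -
    have ab: "a \<in> pcarrier P" "b \<in> pcarrier P"
      using pasture_null_in_carrier[OF P abc] by blast+
    then have "a = pneg P b" using abc c pasture_null_zero_iff[OF P] by blast
    then show ?thesis
      using ab c closed zero neg pasture_null_zero_iff[OF Q] pasture_neg_closed[OF Q] by simp
  qed
  have "(f a, f b, f c) \<in> pnull Q" if abc: "(a, b, c) \<in> pnull P" for a b c
  proof -
    consider "c = pzero P" | "b = pzero P" | "a = pzero P"
      | "a \<noteq> pzero P" "b \<noteq> pzero P" "c \<noteq> pzero P" by blast
    then show ?thesis
    proof cases
      case 1
      then show ?thesis using null_last_zero abc by blast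
    next
      case 2
      then have "(f a, f c, f b) \<in> pnull Q"
        using null_last_zero pasture_null_swap23[OF P abc] by blast
      then show ?thesis using pasture_null_swap23[OF Q] by blast
    next
      case 3
      then have "(f b, f c, f a) \<in> pnull Q"
        using null_last_zero pasture_null_swap23[OF P pasture_null_swap12[OF P abc]] by blast
      then show ?thesis using pasture_null_swap12[OF Q] pasture_null_swap23[OF Q] by blast
    next
      case 4
      then show ?thesis using null_nonzero abc by blast
    qed
  qed
  then show ?thesis unfolding pasture_hom_def using closed zero one mult neg by blast
qed

lemma even_card_sym_diff:
  assumes "finite S" "finite T" "even (card S)" "even (card T)"
  shows "even (card (sym_diff S T))"
proof -
  have "S \<union> T = sym_diff S T \<union> (S \<inter> T)" "sym_diff S T \<inter> (S \<inter> T) = {}" by auto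
  then have "card (S \<union> T) = card (sym_diff S T) + card (S \<inter> T)"
    using assms(1,2) by (simp add: card_Un_disjoint)
  moreover have "card S + card T = card (S \<union> T) + card (S \<inter> T)"
    using card_Un_Int assms(1,2) by blast
  ultimately have "card S + card T = card (sym_diff S T) + 2 * card (S \<inter> T)" by simp
  then show ?thesis using assms(3,4) by (metis even_add even_mult_iff even_numeral)
qed

section \<open>Families of units and the sign relation\<close>

locale pasture_family =
  fixes I :: "'i set" and P :: "'i \<Rightarrow> 'a pasture"
  assumes pasture_factor: "i \<in> I \<Longrightarrow> pasture (P i)"
begin

abbreviation Fam :: "('i \<Rightarrow> 'a) set" where "Fam \<equiv> cp_fams I P"

abbreviation sign_rel :: "('i \<Rightarrow> 'a) \<Rightarrow> ('i \<Rightarrow> 'a) \<Rightarrow> bool" (infix "\<approx>" 50)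
  where "x \<approx> y \<equiv> cp_rel I P x y"

abbreviation cls :: "('i \<Rightarrow> 'a) \<Rightarrow> ('i \<Rightarrow> 'a) set" where "cls \<equiv> cp_class I P"

definition fam_one :: "'i \<Rightarrow> 'a" where
  "fam_one = (\<lambda>i. if i \<in> I then pone (P i) else undefined)"

definition fam_mult :: "('i \<Rightarrow> 'a) \<Rightarrow> ('i \<Rightarrow> 'a) \<Rightarrow> 'i \<Rightarrow> 'a" where
  "fam_mult x y = (\<lambda>i. if i \<in> I then pmult (P i) (x i) (y i) else undefined)"

definition fam_inv :: "('i \<Rightarrow> 'a) \<Rightarrow> 'i \<Rightarrow> 'a" where
  "fam_inv x = (\<lambda>i. if i \<in> I then (SOME y. y \<in> pcarrier (P i) \<and> y \<noteq> pzero (P i) \<and>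
      pmult (P i) (x i) y = pone (P i)) else undefined)"

definition fam_flip :: "'i \<Rightarrow> ('i \<Rightarrow> 'a) \<Rightarrow> 'i \<Rightarrow> 'a" where
  "fam_flip j x = x(j := pneg (P j) (x j))"

definition fam_neg :: "('i \<Rightarrow> 'a) \<Rightarrow> 'i \<Rightarrow> 'a" where
  "fam_neg x = (if I = {} then x else fam_flip (SOME j. j \<in> I) x)"

definition fam_null :: "('i \<Rightarrow> 'a) \<Rightarrow> ('i \<Rightarrow> 'a) \<Rightarrow> ('i \<Rightarrow> 'a) \<Rightarrow> bool" where
  "fam_null x y z \<longleftrightarrow> (\<exists>j\<in>I. (x j, y j, z j) \<in> pnull (P j) \<and>
      (\<forall>i\<in>I - {j}. x i = y i \<and> y i = z i))"

lemma cp_famsI: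
  assumes "\<And>i. i \<in> I \<Longrightarrow> x i \<in> pcarrier (P i)" "\<And>i. i \<in> I \<Longrightarrow> x i \<noteq> pzero (P i)"
    "\<And>i. i \<notin> I \<Longrightarrow> x i = undefined" "finite {i\<in>I. x i \<noteq> pone (P i)}"
  shows "x \<in> Fam"
  using assms unfolding cp_fams_def by auto

lemma cp_famsD:
  assumes "x \<in> Fam"
  shows "i \<in> I \<Longrightarrow> x i \<in> pcarrier (P i)" "i \<in> I \<Longrightarrow> x i \<noteq> pzero (P i)"
    "i \<notin> I \<Longrightarrow> x i = undefined" "finite {i\<in>I. x i \<noteq> pone (P i)}"
  using assms unfolding cp_fams_def by auto

lemma fam_one_in_fams: "fam_one \<in> Fam"
  by (rule cp_famsI)
    (auto simp: fam_one_def pasture_one_in_carrier pasture_one_neq_zero pasture_factor)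

lemma fam_one_mult:
  assumes "x \<in> Fam"
  shows "fam_mult fam_one x = x"
  unfolding fam_mult_def fam_one_def
  using cp_famsD[OF assms] pasture_one_mult[OF pasture_factor] by auto

lemma fam_mult_in_fams:
  assumes "x \<in> Fam" "y \<in> Fam"
  shows "fam_mult x y \<in> Fam"
proof (rule cp_famsI)
  fix i assume i: "i \<in> I"
  show "fam_mult x y i \<in> pcarrier (P i)" "fam_mult x y i \<noteq> pzero (P i)"
    using i cp_famsD[OF assms(1)] cp_famsD[OF assms(2)]
      pasture_mult_closed[OF pasture_factor] pasture_mult_neq_zero[OF pasture_factor]
    by (simp_all add: fam_mult_def)
next
  have "{i\<in>I. fam_mult x y i \<noteq> pone (P i)} \<subseteq>
      {i\<in>I. x i \<noteq> pone (P i)} \<union> {i\<in>I. y i \<noteq> pone (P i)}"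
    using pasture_one_mult[OF pasture_factor] pasture_one_in_carrier[OF pasture_factor]
    unfolding fam_mult_def by force
  then show "finite {i\<in>I. fam_mult x y i \<noteq> pone (P i)}"
    using cp_famsD(4)[OF assms(1)] cp_famsD(4)[OF assms(2)] by (meson finite_UnI finite_subset)
qed (simp add: fam_mult_def)

lemma fam_mult_comm: "x \<in> Fam \<Longrightarrow> y \<in> Fam \<Longrightarrow> fam_mult x y = fam_mult y x"
  unfolding fam_mult_def using cp_famsD pasture_mult_comm[OF pasture_factor] by auto

lemma fam_mult_assoc:
  "x \<in> Fam \<Longrightarrow> y \<in> Fam \<Longrightarrow> z \<in> Fam \<Longrightarrow>
    fam_mult (fam_mult x y) z = fam_mult x (fam_mult y z)"
  unfolding fam_mult_def using cp_famsD pasture_mult_assoc[OF pasture_factor] by auto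

lemma fam_inv_spec:
  assumes "x \<in> Fam" "i \<in> I"
  shows "fam_inv x i \<in> pcarrier (P i) \<and> fam_inv x i \<noteq> pzero (P i) \<and>
    pmult (P i) (x i) (fam_inv x i) = pone (P i)"
proof -
  have "\<exists>y. y \<in> pcarrier (P i) \<and> y \<noteq> pzero (P i) \<and> pmult (P i) (x i) y = pone (P i)"
    using pasture_inverse_ex[OF pasture_factor] cp_famsD[OF assms(1)] assms(2) by blast
  from someI_ex[OF this] show ?thesis unfolding fam_inv_def using assms(2) by simp
qed

lemma fam_inv_in_fams:
  assumes "x \<in> Fam"
  shows "fam_inv x \<in> Fam"
proof (rule cp_famsI)
  have "x i = pone (P i) \<Longrightarrow> fam_inv x i = pone (P i)" if "i \<in> I" for i
    using fam_inv_spec[OF assms that] pasture_one_mult[OF pasture_factor[OF that]] by metis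
  then have "{i\<in>I. fam_inv x i \<noteq> pone (P i)} \<subseteq> {i\<in>I. x i \<noteq> pone (P i)}" by blast
  then show "finite {i\<in>I. fam_inv x i \<noteq> pone (P i)}"
    using cp_famsD(4)[OF assms] finite_subset by blast
qed (use fam_inv_spec[OF assms] in \<open>auto simp: fam_inv_def\<close>)

lemma fam_mult_inv: "x \<in> Fam \<Longrightarrow> fam_mult x (fam_inv x) = fam_one"
  unfolding fam_mult_def fam_one_def using fam_inv_spec by auto

lemma fun_upd_in_fams:
  assumes "x \<in> Fam" "j \<in> I" "a \<in> pcarrier (P j)" "a \<noteq> pzero (P j)"
  shows "x(j := a) \<in> Fam"
proof (rule cp_famsI)
  have "{i\<in>I. (x(j := a)) i \<noteq> pone (P i)} \<subseteq> insert j {i\<in>I. x i \<noteq> pone (P i)}" by auto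
  then show "finite {i\<in>I. (x(j := a)) i \<noteq> pone (P i)}"
    using cp_famsD(4)[OF assms(1)] finite_subset by blast
qed (use assms cp_famsD[OF assms(1)] in auto)

lemma fam_flip_in_fams: "x \<in> Fam \<Longrightarrow> j \<in> I \<Longrightarrow> fam_flip j x \<in> Fam"
  unfolding fam_flip_def
  using fun_upd_in_fams cp_famsD pasture_neg_closed[OF pasture_factor]
    pasture_neg_neq_zero[OF pasture_factor] by blast

lemma fam_flip_flip: "x \<in> Fam \<Longrightarrow> j \<in> I \<Longrightarrow> fam_flip j (fam_flip j x) = x"
  unfolding fam_flip_def using cp_famsD(1) pasture_neg_neg[OF pasture_factor] by auto

lemma fam_mult_flip:
  "w \<in> Fam \<Longrightarrow> x \<in> Fam \<Longrightarrow> j \<in> I \<Longrightarrow> fam_mult w (fam_flip j x) = fam_flip j (fam_mult w x)"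
  unfolding fam_mult_def fam_flip_def
  using cp_famsD(1) pasture_mult_neg[OF pasture_factor] by auto

lemma fam_neg_in_fams: "x \<in> Fam \<Longrightarrow> fam_neg x \<in> Fam"
  unfolding fam_neg_def by (cases "I = {}") (simp_all add: fam_flip_in_fams some_in_eq)

lemma fam_neg_neg: "x \<in> Fam \<Longrightarrow> fam_neg (fam_neg x) = x"
  unfolding fam_neg_def by (cases "I = {}") (simp_all add: fam_flip_flip some_in_eq)

lemma fam_mult_neg: "w \<in> Fam \<Longrightarrow> x \<in> Fam \<Longrightarrow> fam_mult w (fam_neg x) = fam_neg (fam_mult w x)"
  unfolding fam_neg_def by (cases "I = {}") (simp_all add: fam_mult_flip some_in_eq)

lemma fam_null_swap12: "fam_null x y z \<Longrightarrow> fam_null y x z"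
  and fam_null_swap23: "fam_null x y z \<Longrightarrow> fam_null x z y"
  unfolding fam_null_def
  using pasture_null_swap12[OF pasture_factor] pasture_null_swap23[OF pasture_factor] by metis+

lemma fam_null_mult:
  assumes "w \<in> Fam" "fam_null x y z"
  shows "fam_null (fam_mult w x) (fam_mult w y) (fam_mult w z)"
proof -
  obtain j where j: "j \<in> I" "(x j, y j, z j) \<in> pnull (P j)"
    and others: "\<forall>i\<in>I - {j}. x i = y i \<and> y i = z i"
    using assms(2) unfolding fam_null_def by blast
  have "(fam_mult w x j, fam_mult w y j, fam_mult w z j) \<in> pnull (P j)"
    using pasture_null_mult[OF pasture_factor[OF j(1)] j(2)] cp_famsD(1)[OF assms(1) j(1)] j(1)
    by (simp add: fam_mult_def)
  then show ?thesis using j(1) others unfolding fam_null_def fam_mult_def by auto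
qed

lemma fam_null_fun_upd:
  "j \<in> I \<Longrightarrow> (a, b, c) \<in> pnull (P j) \<Longrightarrow> fam_null (x(j := a)) (x(j := b)) (x(j := c))"
  unfolding fam_null_def by auto

lemma cp_relI:
  assumes "S \<subseteq> I" "finite S" "even (card S)" "\<And>i. i \<in> S \<Longrightarrow> x i = pneg (P i) (y i)"
    "\<And>i. i \<in> I - S \<Longrightarrow> x i = y i"
  shows "x \<approx> y"
  using assms unfolding cp_rel_def by blast

lemma cp_rel_refl: "x \<approx> x"
  by (rule cp_relI[of "{}"]) auto

lemma cp_rel_sym:
  assumes "y \<in> Fam" "x \<approx> y"
  shows "y \<approx> x"
proof -
  obtain S where S: "S \<subseteq> I" "finite S" "even (card S)" "\<forall>i\<in>S. x i = pneg (P i) (y i)"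
    "\<forall>i\<in>I - S. x i = y i"
    using assms(2) unfolding cp_rel_def by blast
  show ?thesis
  proof (rule cp_relI[OF S(1-3)])
    fix i assume "i \<in> S"
    then show "y i = pneg (P i) (x i)"
      using S(1,4) cp_famsD(1)[OF assms(1)] pasture_neg_neg[OF pasture_factor] by auto
  qed (use S(5) in auto)
qed

lemma cp_rel_trans:
  assumes "z \<in> Fam" "x \<approx> y" "y \<approx> z"
  shows "x \<approx> z"
proof -
  obtain S where S: "S \<subseteq> I" "finite S" "even (card S)" "\<forall>i\<in>S. x i = pneg (P i) (y i)"
    "\<forall>i\<in>I - S. x i = y i"
    using assms(2) unfolding cp_rel_def by blast
  obtain T where T: "T \<subseteq> I" "finite T" "even (card T)" "\<forall>i\<in>T. y i = pneg (P i) (z i)"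
    "\<forall>i\<in>I - T. y i = z i"
    using assms(3) unfolding cp_rel_def by blast
  show ?thesis
  proof (rule cp_relI[of "sym_diff S T"])
    show "even (card (sym_diff S T))" using even_card_sym_diff S(2,3) T(2,3) by blast
    fix i
    show "i \<in> sym_diff S T \<Longrightarrow> x i = pneg (P i) (z i)" using S T by auto
    assume i: "i \<in> I - sym_diff S T"
    show "x i = z i"
    proof (cases "i \<in> S")
      case True
      with i have "i \<in> T" by blast
      then show ?thesis
        using True S(4) T(4) cp_famsD(1)[OF assms(1)] pasture_neg_neg[OF pasture_factor] T(1)
        by auto
    qed (use i S T in auto)
  qed (use S T in auto)
qed

lemma cp_rel_mult_left:
  assumes "w \<in> Fam" "x' \<in> Fam" "x \<approx> x'"
  shows "fam_mult w x \<approx> fam_mult w x'"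
proof -
  obtain S where S: "S \<subseteq> I" "finite S" "even (card S)" "\<forall>i\<in>S. x i = pneg (P i) (x' i)"
    "\<forall>i\<in>I - S. x i = x' i"
    using assms(3) unfolding cp_rel_def by blast
  show ?thesis
  proof (rule cp_relI[OF S(1-3)])
    fix i assume "i \<in> S"
    then show "fam_mult w x i = pneg (P i) (fam_mult w x' i)"
      using S(1,4) cp_famsD(1)[OF assms(1)] cp_famsD(1)[OF assms(2)]
        pasture_mult_neg[OF pasture_factor]
      by (auto simp: fam_mult_def)
  qed (use S(5) in \<open>simp add: fam_mult_def\<close>)
qed

lemma cp_rel_mult:
  assumes "x \<in> Fam" "x' \<in> Fam" "y \<in> Fam" "y' \<in> Fam" "x \<approx> x'" "y \<approx> y'"
  shows "fam_mult x y \<approx> fam_mult x' y'"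
proof -
  have "fam_mult y x \<approx> fam_mult y x'" using cp_rel_mult_left assms by blast
  then have "fam_mult x y \<approx> fam_mult x' y" using fam_mult_comm assms by metis
  moreover have "fam_mult x' y \<approx> fam_mult x' y'" using cp_rel_mult_left assms by blast
  ultimately show ?thesis using cp_rel_trans fam_mult_in_fams assms by blast
qed

lemma cp_rel_flip:
  assumes "x \<approx> y"
  shows "fam_flip j x \<approx> fam_flip j y"
proof -
  obtain S where S: "S \<subseteq> I" "finite S" "even (card S)" "\<forall>i\<in>S. x i = pneg (P i) (y i)"
    "\<forall>i\<in>I - S. x i = y i"
    using assms unfolding cp_rel_def by blast
  show ?thesis by (rule cp_relI[OF S(1-3)]) (use S(4,5) in \<open>auto simp: fam_flip_def\<close>)
qed

lemma cp_rel_neg: "x \<approx> y \<Longrightarrow> fam_neg x \<approx> fam_neg y"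
  unfolding fam_neg_def by (cases "I = {}") (simp_all add: cp_rel_flip)

lemma fam_flip_rel_flip:
  assumes "x \<in> Fam" "j \<in> I" "k \<in> I"
  shows "fam_flip j x \<approx> fam_flip k x"
proof (cases "j = k")
  case False
  show ?thesis
  proof (rule cp_relI[of "{j, k}"])
    show "fam_flip j x i = pneg (P i) (fam_flip k x i)" if "i \<in> {j, k}" for i
      using that False assms(3) cp_famsD(1)[OF assms(1) assms(3)] pasture_neg_neg[OF pasture_factor]
      by (auto simp: fam_flip_def)
  qed (use assms False in \<open>auto simp: fam_flip_def\<close>)
qed (simp add: cp_rel_refl)

lemma fam_neg_rel_flip:
  assumes "x \<in> Fam" "j \<in> I"
  shows "fam_neg x \<approx> fam_flip j x"
proof -
  have "I \<noteq> {}" "(SOME k. k \<in> I) \<in> I" using assms(2) some_in_eq by blast+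
  then show ?thesis unfolding fam_neg_def using fam_flip_rel_flip assms by simp
qed

lemma cp_class_self: "x \<in> Fam \<Longrightarrow> x \<in> cls x"
  unfolding cp_class_def using cp_rel_refl by blast

lemma cp_class_neq_empty: "x \<in> Fam \<Longrightarrow> cls x \<noteq> {}"
  using cp_class_self by blast

lemma cp_class_subset: "cls x \<subseteq> Fam"
  unfolding cp_class_def by blast

lemma cp_class_eq_iff:
  assumes "x \<in> Fam" "y \<in> Fam"
  shows "cls x = cls y \<longleftrightarrow> x \<approx> y"
proof
  assume "cls x = cls y"
  then show "x \<approx> y" using cp_class_self[OF assms(1)] unfolding cp_class_def by blast
next
  assume "x \<approx> y"
  then show "cls x = cls y"
    unfolding cp_class_def using cp_rel_trans cp_rel_sym assms by blast
qed

lemma cp_class_eq_of_mem: "x \<in> Fam \<Longrightarrow> y \<in> cls x \<Longrightarrow> cls y = cls x"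
  using cp_class_eq_iff cp_class_subset unfolding cp_class_def by blast

lemma cp_class_image_mem: "A \<in> cls ` Fam \<Longrightarrow> x \<in> A \<Longrightarrow> x \<in> Fam \<and> A = cls x"
  using cp_class_subset cp_class_eq_of_mem by blast

lemma cp_rep_in_class: "x \<in> Fam \<Longrightarrow> cp_rep (cls x) \<in> cls x"
  unfolding cp_rep_def using cp_class_self by (metis someI)

lemma cp_rep_in_fams: "x \<in> Fam \<Longrightarrow> cp_rep (cls x) \<in> Fam"
  using cp_rep_in_class cp_class_subset by blast

lemma cp_rep_rel: "x \<in> Fam \<Longrightarrow> cp_rep (cls x) \<approx> x"
  using cp_rep_in_class unfolding cp_class_def by blast

section \<open>The coproduct is a pasture\<close>

abbreviation CP :: "('i \<Rightarrow> 'a) set pasture" where "CP \<equiv> coprod I P"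

lemma coprod_carrier: "pcarrier CP = {{}} \<union> cls ` Fam"
  by (simp add: coprod_def)

lemma coprod_zero: "pzero CP = {}"
  by (simp add: coprod_def)

lemma coprod_one: "pone CP = cls fam_one"
  by (simp add: coprod_def fam_one_def)

lemma coprod_mult_empty: "pmult CP {} B = {}" "pmult CP A {} = {}"
  by (simp_all add: coprod_def)

lemma coprod_neg_empty: "pneg CP {} = {}"
  by (simp add: coprod_def)

lemma coprod_neg_eq:
  "pneg CP A = (if A = {} then {} else if I = {} then A
     else cls (fam_flip (SOME j. j \<in> I) (cp_rep A)))"
  by (simp add: coprod_def Let_def fam_flip_def)

lemma coprod_null_iff:
  "(A, B, D) \<in> pnull CP \<longleftrightarrow>
    (A \<in> cls ` Fam \<and> B \<in> cls ` Fam \<and> D \<in> cls ` Fam \<and> (\<exists>x\<in>A. \<exists>y\<in>B. \<exists>z\<in>D. fam_null x y z)) \<or>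
    (A \<in> pcarrier CP \<and> B \<in> pcarrier CP \<and> D \<in> pcarrier CP \<and>
      (D = {} \<and> A = pneg CP B \<or> B = {} \<and> A = pneg CP D \<or> A = {} \<and> B = pneg CP D))"
  unfolding coprod_neg_eq by (simp add: coprod_def Let_def fam_flip_def fam_null_def)

lemma coprod_carrier_cases:
  assumes "A \<in> pcarrier CP"
  obtains "A = {}" | x where "x \<in> Fam" "A = cls x"
  using assms coprod_carrier by blast

lemma coprod_empty_in_carrier: "{} \<in> pcarrier CP"
  using coprod_carrier by blast

lemma coprod_class_in_carrier: "x \<in> Fam \<Longrightarrow> cls x \<in> pcarrier CP"
  using coprod_carrier by blast

lemma coprod_mult_class:
  assumes "x \<in> Fam" "y \<in> Fam"
  shows "pmult CP (cls x) (cls y) = cls (fam_mult x y)"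
proof -
  have "pmult CP (cls x) (cls y) = cls (fam_mult (cp_rep (cls x)) (cp_rep (cls y)))"
    using cp_class_neq_empty assms by (simp add: coprod_def fam_mult_def)
  also have "\<dots> = cls (fam_mult x y)"
    using assms cp_rep_in_fams cp_rep_rel fam_mult_in_fams
    by (simp add: cp_class_eq_iff cp_rel_mult)
  finally show ?thesis .
qed

lemma coprod_neg_class:
  assumes "x \<in> Fam"
  shows "pneg CP (cls x) = cls (fam_neg x)"
proof (cases "I = {}")
  case True
  then show ?thesis
    unfolding coprod_neg_eq fam_neg_def using cp_class_neq_empty[OF assms] by simp
next
  case False
  then have "pneg CP (cls x) = cls (fam_neg (cp_rep (cls x)))"
    using cp_class_neq_empty[OF assms] by (simp add: coprod_neg_eq fam_neg_def)
  also have "\<dots> = cls (fam_neg x)"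
    using assms cp_rep_in_fams cp_rep_rel fam_neg_in_fams
    by (simp add: cp_class_eq_iff cp_rel_neg)
  finally show ?thesis .
qed

lemma coprod_neg_class_flip:
  assumes "x \<in> Fam" "j \<in> I"
  shows "pneg CP (cls x) = cls (fam_flip j x)"
  using coprod_neg_class cp_class_eq_iff fam_neg_rel_flip fam_neg_in_fams fam_flip_in_fams assms
  by simp

lemma coprod_null_cases:
  assumes "(A, B, D) \<in> pnull CP"
  obtains (nonzero) x y z where "x \<in> Fam" "y \<in> Fam" "z \<in> Fam" "A = cls x" "B = cls y" "D = cls z"
      "fam_null x y z"
    | (zero) "A \<in> pcarrier CP" "B \<in> pcarrier CP" "D \<in> pcarrier CP"
      "D = {} \<and> A = pneg CP B \<or> B = {} \<and> A = pneg CP D \<or> A = {} \<and> B = pneg CP D"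
proof -
  consider (nonzero) "A \<in> cls ` Fam" "B \<in> cls ` Fam" "D \<in> cls ` Fam"
      "\<exists>x\<in>A. \<exists>y\<in>B. \<exists>z\<in>D. fam_null x y z"
    | (zero) "A \<in> pcarrier CP" "B \<in> pcarrier CP" "D \<in> pcarrier CP"
      "D = {} \<and> A = pneg CP B \<or> B = {} \<and> A = pneg CP D \<or> A = {} \<and> B = pneg CP D"
    using assms unfolding coprod_null_iff by blast
  then show thesis
  proof cases
    case nonzero
    then obtain x y z where "x \<in> A" "y \<in> B" "z \<in> D" "fam_null x y z" by blast
    with nonzero(1-3) show thesis using cp_class_image_mem that(1) by metis
  qed (rule that(2))
qed

lemma coprod_null_classI:
  "x \<in> Fam \<Longrightarrow> y \<in> Fam \<Longrightarrow> z \<in> Fam \<Longrightarrow> fam_null x y z \<Longrightarrow> (cls x, cls y, cls z) \<in> pnull CP"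
  unfolding coprod_null_iff using cp_class_self by blast

lemma coprod_mult_closed:
  assumes "A \<in> pcarrier CP" "B \<in> pcarrier CP"
  shows "pmult CP A B \<in> pcarrier CP"
proof -
  consider "A = {} \<or> B = {}" | x y where "x \<in> Fam" "y \<in> Fam" "A = cls x" "B = cls y"
    using assms coprod_carrier_cases by metis
  then show ?thesis
    by cases (auto simp: coprod_mult_empty coprod_carrier coprod_mult_class fam_mult_in_fams)
qed

lemma coprod_mult_assoc:
  assumes "A \<in> pcarrier CP" "B \<in> pcarrier CP" "D \<in> pcarrier CP"
  shows "pmult CP (pmult CP A B) D = pmult CP A (pmult CP B D)"
proof -
  consider "A = {} \<or> B = {} \<or> D = {}"
    | x y z where "x \<in> Fam" "y \<in> Fam" "z \<in> Fam" "A = cls x" "B = cls y" "D = cls z"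
    using assms coprod_carrier_cases by metis
  then show ?thesis
    by cases (auto simp: coprod_mult_empty coprod_mult_class fam_mult_in_fams fam_mult_assoc)
qed

lemma coprod_mult_comm:
  assumes "A \<in> pcarrier CP" "B \<in> pcarrier CP"
  shows "pmult CP A B = pmult CP B A"
proof -
  consider "A = {} \<or> B = {}" | x y where "x \<in> Fam" "y \<in> Fam" "A = cls x" "B = cls y"
    using assms coprod_carrier_cases by metis
  then show ?thesis by cases (auto simp: coprod_mult_empty coprod_mult_class fam_mult_comm)
qed

lemma coprod_one_mult:
  assumes "A \<in> pcarrier CP"
  shows "pmult CP (pone CP) A = A"
  using assms by (cases rule: coprod_carrier_cases)
    (auto simp: coprod_mult_empty coprod_one coprod_mult_class fam_one_in_fams fam_one_mult)

lemma coprod_mult_neq_zero: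
  assumes "A \<in> pcarrier CP - {pzero CP}" "B \<in> pcarrier CP - {pzero CP}"
  shows "pmult CP A B \<noteq> pzero CP"
proof -
  obtain x y where "x \<in> Fam" "y \<in> Fam" "A = cls x" "B = cls y"
    using assms coprod_carrier_cases coprod_zero by (metis DiffE insertI1)
  then show ?thesis
    using coprod_mult_class coprod_zero cp_class_neq_empty fam_mult_in_fams by simp
qed

lemma coprod_inverse_ex:
  assumes "A \<in> pcarrier CP - {pzero CP}"
  shows "\<exists>B\<in>pcarrier CP - {pzero CP}. pmult CP A B = pone CP"
proof -
  obtain x where x: "x \<in> Fam" "A = cls x"
    using assms coprod_carrier_cases coprod_zero by (metis DiffE insertI1)
  have "cls (fam_inv x) \<in> pcarrier CP - {pzero CP}"
    using coprod_class_in_carrier fam_inv_in_fams x cp_class_neq_empty coprod_zero by simp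
  moreover have "pmult CP A (cls (fam_inv x)) = pone CP"
    using x coprod_mult_class fam_inv_in_fams fam_mult_inv coprod_one by simp
  ultimately show ?thesis by blast
qed

lemma coprod_neg_closed:
  assumes "A \<in> pcarrier CP"
  shows "pneg CP A \<in> pcarrier CP"
  using assms by (cases rule: coprod_carrier_cases)
    (auto simp: coprod_neg_empty coprod_empty_in_carrier coprod_class_in_carrier coprod_neg_class
      fam_neg_in_fams)

lemma coprod_neg_neg:
  assumes "A \<in> pcarrier CP"
  shows "pneg CP (pneg CP A) = A"
  using assms by (cases rule: coprod_carrier_cases)
    (auto simp: coprod_neg_empty coprod_neg_class fam_neg_in_fams fam_neg_neg)

lemma coprod_mult_neg:
  assumes "A \<in> pcarrier CP" "B \<in> pcarrier CP"
  shows "pmult CP A (pneg CP B) = pneg CP (pmult CP A B)"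
proof -
  consider "A = {} \<or> B = {}" | w x where "w \<in> Fam" "x \<in> Fam" "A = cls w" "B = cls x"
    using assms coprod_carrier_cases by metis
  then show ?thesis
    by cases (auto simp: coprod_mult_empty coprod_neg_empty coprod_mult_class coprod_neg_class
      fam_mult_in_fams fam_neg_in_fams fam_mult_neg)
qed

lemma coprod_null_in_carrier:
  assumes "(A, B, D) \<in> pnull CP"
  shows "A \<in> pcarrier CP \<and> B \<in> pcarrier CP \<and> D \<in> pcarrier CP"
  using assms by (cases rule: coprod_null_cases) (auto simp: coprod_class_in_carrier)

lemma coprod_null_swap12:
  assumes "(A, B, D) \<in> pnull CP"
  shows "(B, A, D) \<in> pnull CP"
  using assms
proof (cases rule: coprod_null_cases)
  case nonzero
  then show ?thesis using coprod_null_classI fam_null_swap12 by simp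
next
  case zero
  then show ?thesis using coprod_neg_neg unfolding coprod_null_iff by auto
qed

lemma coprod_null_swap23:
  assumes "(A, B, D) \<in> pnull CP"
  shows "(A, D, B) \<in> pnull CP"
  using assms
proof (cases rule: coprod_null_cases)
  case nonzero
  then show ?thesis using coprod_null_classI fam_null_swap23 by simp
next
  case zero
  then show ?thesis using coprod_neg_neg unfolding coprod_null_iff by auto
qed

lemma coprod_null_mult:
  assumes "(A, B, D) \<in> pnull CP" "E \<in> pcarrier CP"
  shows "(pmult CP E A, pmult CP E B, pmult CP E D) \<in> pnull CP"
  using assms(1)
proof (cases rule: coprod_null_cases)
  case (nonzero x y z)
  from assms(2) show ?thesis
  proof (cases rule: coprod_carrier_cases)
    case 1
    then show ?thesis
      by (simp add: coprod_mult_empty coprod_null_iff coprod_carrier coprod_neg_empty)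
  next
    case (2 w)
    then show ?thesis using nonzero
      by (simp add: coprod_mult_class coprod_null_classI fam_mult_in_fams fam_null_mult)
  qed
next
  case zero
  have closed: "pmult CP E A \<in> pcarrier CP" "pmult CP E B \<in> pcarrier CP"
    "pmult CP E D \<in> pcarrier CP"
    using zero(1-3) assms(2) coprod_mult_closed by blast+
  have "pmult CP E D = {} \<and> pmult CP E A = pneg CP (pmult CP E B) \<or>
      pmult CP E B = {} \<and> pmult CP E A = pneg CP (pmult CP E D) \<or>
      pmult CP E A = {} \<and> pmult CP E B = pneg CP (pmult CP E D)"
    using zero coprod_mult_neg[OF assms(2)] coprod_mult_empty by auto
  then show ?thesis unfolding coprod_null_iff using closed by blast
qed

lemma coprod_null_zero_iff:
  assumes "A \<in> pcarrier CP" "B \<in> pcarrier CP"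
  shows "(A, B, pzero CP) \<in> pnull CP \<longleftrightarrow> A = pneg CP B"
proof
  assume "(A, B, pzero CP) \<in> pnull CP"
  then show "A = pneg CP B"
  proof (cases rule: coprod_null_cases)
    case nonzero
    then show ?thesis using coprod_zero cp_class_neq_empty by metis
  qed (auto simp: coprod_zero coprod_neg_empty)
qed (use assms in \<open>simp add: coprod_null_iff coprod_zero coprod_carrier\<close>)

lemma pasture_coprod: "pasture CP"
proof (rule pastureI)
  show "pzero CP \<in> pcarrier CP" "pone CP \<in> pcarrier CP" "pone CP \<noteq> pzero CP"
    by (simp_all add: coprod_zero coprod_carrier coprod_one fam_one_in_fams cp_class_neq_empty)
  show "pmult CP (pzero CP) A = pzero CP" for A
    by (simp add: coprod_zero coprod_mult_empty)
  show "pneg CP (pzero CP) = pzero CP"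
    by (simp add: coprod_zero coprod_neg_empty)
  show "pnull CP \<subseteq> pcarrier CP \<times> pcarrier CP \<times> pcarrier CP"
    using coprod_null_in_carrier by auto
qed (fact coprod_mult_closed coprod_mult_assoc coprod_mult_comm coprod_one_mult coprod_mult_neq_zero
  coprod_inverse_ex coprod_neg_closed coprod_neg_neg coprod_null_swap12 coprod_null_swap23
  coprod_null_mult coprod_null_zero_iff)+

section \<open>The canonical injections\<close>

lemma cp_inj_eq: "cp_inj I P j a = (if a = pzero (P j) then {} else cls (fam_one(j := a)))"
  unfolding cp_inj_def fam_one_def by (simp add: fun_upd_def)

context
  fixes j
  assumes j: "j \<in> I"
begin

lemma fam_one_upd_in_fams: "a \<in> pcarrier (P j) \<Longrightarrow> a \<noteq> pzero (P j) \<Longrightarrow> fam_one(j := a) \<in> Fam"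
  using fun_upd_in_fams fam_one_in_fams j by blast

lemma fam_mult_one_upd:
  "fam_mult (fam_one(j := a)) (fam_one(j := b)) = fam_one(j := pmult (P j) a b)"
  unfolding fam_mult_def fam_one_def
  using j pasture_one_mult[OF pasture_factor] pasture_one_in_carrier[OF pasture_factor] by auto

lemma cp_inj_closed: "a \<in> pcarrier (P j) \<Longrightarrow> cp_inj I P j a \<in> pcarrier CP"
  by (simp add: cp_inj_eq coprod_empty_in_carrier coprod_class_in_carrier fam_one_upd_in_fams)

lemma cp_inj_mult:
  assumes "a \<in> pcarrier (P j)" "b \<in> pcarrier (P j)"
  shows "cp_inj I P j (pmult (P j) a b) = pmult CP (cp_inj I P j a) (cp_inj I P j b)"
proof (cases "a = pzero (P j) \<or> b = pzero (P j)")
  case True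
  then have "pmult (P j) a b = pzero (P j)"
    using pasture_zero_mult pasture_mult_zero pasture_factor[OF j] assms by auto
  then show ?thesis using True by (auto simp: cp_inj_eq coprod_mult_empty)
next
  case False
  then have "pmult (P j) a b \<noteq> pzero (P j)"
    using pasture_mult_neq_zero[OF pasture_factor[OF j] assms] by blast
  then show ?thesis
    using False assms
    by (simp add: cp_inj_eq coprod_mult_class fam_one_upd_in_fams fam_mult_one_upd)
qed

lemma cp_inj_neg:
  assumes "a \<in> pcarrier (P j)"
  shows "cp_inj I P j (pneg (P j) a) = pneg CP (cp_inj I P j a)"
proof (cases "a = pzero (P j)")
  case True
  then show ?thesis
    by (simp add: cp_inj_eq coprod_neg_empty pasture_neg_zero[OF pasture_factor[OF j]])
next
  case False
  have "cp_inj I P j (pneg (P j) a) = cls (fam_one(j := pneg (P j) a))"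
    using False pasture_neg_neq_zero[OF pasture_factor[OF j] assms] by (simp add: cp_inj_eq)
  also have "\<dots> = cls (fam_flip j (fam_one(j := a)))"
    by (simp add: fam_flip_def)
  also have "\<dots> = pneg CP (cls (fam_one(j := a)))"
    using coprod_neg_class_flip fam_one_upd_in_fams assms False j by simp
  also have "\<dots> = pneg CP (cp_inj I P j a)"
    using False by (simp add: cp_inj_eq)
  finally show ?thesis .
qed

lemma cp_inj_null_nonzero:
  assumes "(a, b, c) \<in> pnull (P j)" "a \<noteq> pzero (P j)" "b \<noteq> pzero (P j)" "c \<noteq> pzero (P j)"
  shows "(cp_inj I P j a, cp_inj I P j b, cp_inj I P j c) \<in> pnull CP"
  using pasture_null_in_carrier[OF pasture_factor[OF j] assms(1)] assms j
  by (simp add: cp_inj_eq coprod_null_classI fam_one_upd_in_fams fam_null_fun_upd)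

lemma pasture_hom_cp_inj: "pasture_hom (P j) CP (cp_inj I P j)"
proof (rule pasture_homI[OF pasture_factor[OF j] pasture_coprod])
  show "cp_inj I P j (pzero (P j)) = pzero CP"
    by (simp add: cp_inj_eq coprod_zero)
  have "fam_one(j := pone (P j)) = fam_one"
    using j by (simp add: fam_one_def fun_upd_idem)
  then show "cp_inj I P j (pone (P j)) = pone CP"
    using pasture_one_neq_zero[OF pasture_factor[OF j]] by (simp add: cp_inj_eq coprod_one)
qed (fact cp_inj_closed cp_inj_mult cp_inj_neg cp_inj_null_nonzero)+

end

end

theorem lemma7p3:
  fixes I :: "'i set" and P :: "'i \<Rightarrow> 'a pasture"
  assumes "\<forall>i\<in>I. pasture (P i)"
  shows "pasture (coprod I P) \<and> (\<forall>j\<in>I. pasture_hom (P j) (coprod I P) (cp_inj I P j))"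
proof -
  interpret pasture_family I P
    using assms by unfold_locales blast
  show ?thesis using pasture_coprod pasture_hom_cp_inj by blast
qed

end
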